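(* Let $(I,\le)$ be a partially ordered set and $(B_i)_{i\in I}$ a partial Boolean algebra in which every $B_i$ is complete and $B_i\subseteq B_j$ for $i\le j$. Let $X=\bigcup_{i\in I}B_i$ be the associated complete orthomodular lattice and $Y=\{f:I\to X\mid f(i)\in B_i\ \forall i,\ f \text{ monotone}\}$ the associated complete Heyting algebra (ordered pointwise). Define $D:X\to Y$ by $D(x)(i)=x$ if $x\in B_i$ and $D(x)(i)=0$ if $x\notin B_i$. Then $D$ is injective and reflects the order: if $D(x)\le D(y)$ in $Y$, then $x\le y$ in $X$.
   Context: A partial Boolean algebra is a family $(B_i)_{i\in I}$ of Boolean algebras whose structure coincides on overlaps: all $B_i$ have the same least element $0$; for $x,y\in B_i\cap B_j$, $x\le_i y$ iff $x\le_j y$, $\neg_i x=\neg_j x$, $x\vee_i y=x\vee_j y$; if $x\le_i y$ and $y\le_j z$ then $x\le_k z$ for some $k$; and if $y\le_i\neg_i x$, $x\le_j z$, $y\le_k z$ then $x,y,z\in B_l$ for some $l$. The union $X=\bigcup_iB_i$ then carries the amalgamated structure ($x\le y$ iff $x\le_i y$ in some $B_i$ containing both, $x^\perp=\neg_i x$, etc.), making it an orthomodular lattice. *)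

theory Defs
  imports Main
begin

definition ba_meet :: "('a \<Rightarrow> 'a) \<Rightarrow> ('a \<Rightarrow> 'a \<Rightarrow> 'a) \<Rightarrow> 'a \<Rightarrow> 'a \<Rightarrow> 'a" where
  "ba_meet neg jn x y = neg (jn (neg x) (neg y))"

definition is_boolean_algebra ::
  "'a set \<Rightarrow> ('a \<Rightarrow> 'a \<Rightarrow> bool) \<Rightarrow> ('a \<Rightarrow> 'a) \<Rightarrow> ('a \<Rightarrow> 'a \<Rightarrow> 'a) \<Rightarrow> 'a \<Rightarrow> bool" where
  "is_boolean_algebra C le neg jn z \<longleftrightarrow>
     (\<forall>x\<in>C. le x x) \<and>
     (\<forall>x\<in>C. \<forall>y\<in>C. le x y \<and> le y x \<longrightarrow> x = y) \<and>
     (\<forall>x\<in>C. \<forall>y\<in>C. \<forall>w\<in>C. le x y \<and> le y w \<longrightarrow> le x w) \<and>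
     z \<in> C \<and> (\<forall>x\<in>C. le z x) \<and>
     (\<forall>x\<in>C. neg x \<in> C) \<and>
     (\<forall>x\<in>C. \<forall>y\<in>C. jn x y \<in> C \<and> le x (jn x y) \<and> le y (jn x y) \<and>
        (\<forall>w\<in>C. le x w \<and> le y w \<longrightarrow> le (jn x y) w)) \<and>
     (\<forall>x\<in>C. \<forall>y\<in>C. le (ba_meet neg jn x y) x \<and> le (ba_meet neg jn x y) y \<and>
        (\<forall>w\<in>C. le w x \<and> le w y \<longrightarrow> le w (ba_meet neg jn x y))) \<and>
     (\<forall>x\<in>C. \<forall>y\<in>C. \<forall>w\<in>C.
        ba_meet neg jn x (jn y w) = jn (ba_meet neg jn x y) (ba_meet neg jn x w)) \<and>
     (\<forall>x\<in>C. le x (neg z)) \<and>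
     (\<forall>x\<in>C. jn x (neg x) = neg z \<and> ba_meet neg jn x (neg x) = z)"

definition is_complete_ba ::
  "'a set \<Rightarrow> ('a \<Rightarrow> 'a \<Rightarrow> bool) \<Rightarrow> bool" where
  "is_complete_ba C le \<longleftrightarrow>
     (\<forall>S\<subseteq>C. \<exists>s\<in>C. (\<forall>x\<in>S. le x s) \<and> (\<forall>w\<in>C. (\<forall>x\<in>S. le x w) \<longrightarrow> le s w))"

definition partial_boolean_algebra ::
  "('i \<Rightarrow> 'a set) \<Rightarrow> ('i \<Rightarrow> 'a \<Rightarrow> 'a \<Rightarrow> bool) \<Rightarrow> ('i \<Rightarrow> 'a \<Rightarrow> 'a) \<Rightarrow>
   ('i \<Rightarrow> 'a \<Rightarrow> 'a \<Rightarrow> 'a) \<Rightarrow> 'a \<Rightarrow> bool" where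
  "partial_boolean_algebra C le neg jn z \<longleftrightarrow>
     (\<forall>i. is_boolean_algebra (C i) (le i) (neg i) (jn i) z) \<and>
     (\<forall>i j. \<forall>x\<in>C i \<inter> C j. \<forall>y\<in>C i \<inter> C j.
        (le i x y \<longleftrightarrow> le j x y) \<and> jn i x y = jn j x y) \<and>
     (\<forall>i j. \<forall>x\<in>C i \<inter> C j. neg i x = neg j x) \<and>
     (\<forall>i j x y w. x \<in> C i \<and> y \<in> C i \<and> le i x y \<and> y \<in> C j \<and> w \<in> C j \<and> le j y w
        \<longrightarrow> (\<exists>k. x \<in> C k \<and> w \<in> C k \<and> le k x w)) \<and>
     (\<forall>i j k x y w. x \<in> C i \<and> y \<in> C i \<and> le i y (neg i x) \<and>
        x \<in> C j \<and> w \<in> C j \<and> le j x w \<and> y \<in> C k \<and> w \<in> C k \<and> le k y w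
        \<longrightarrow> (\<exists>l. x \<in> C l \<and> y \<in> C l \<and> w \<in> C l))"

definition pba_carrier :: "('i \<Rightarrow> 'a set) \<Rightarrow> 'a set" where
  "pba_carrier C = (\<Union>i. C i)"

definition pba_le :: "('i \<Rightarrow> 'a set) \<Rightarrow> ('i \<Rightarrow> 'a \<Rightarrow> 'a \<Rightarrow> bool) \<Rightarrow> 'a \<Rightarrow> 'a \<Rightarrow> bool" where
  "pba_le C le x y \<longleftrightarrow> (\<exists>i. x \<in> C i \<and> y \<in> C i \<and> le i x y)"

definition heyting_Y ::
  "('i::order \<Rightarrow> 'a set) \<Rightarrow> ('i \<Rightarrow> 'a \<Rightarrow> 'a \<Rightarrow> bool) \<Rightarrow> ('i \<Rightarrow> 'a) set" where
  "heyting_Y C le = {f. (\<forall>i. f i \<in> C i) \<and> (\<forall>i j. i \<le> j \<longrightarrow> pba_le C le (f i) (f j))}"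

definition heyting_Y_le ::
  "('i \<Rightarrow> 'a set) \<Rightarrow> ('i \<Rightarrow> 'a \<Rightarrow> 'a \<Rightarrow> bool) \<Rightarrow> ('i \<Rightarrow> 'a) \<Rightarrow> ('i \<Rightarrow> 'a) \<Rightarrow> bool" where
  "heyting_Y_le C le f g \<longleftrightarrow> (\<forall>i. pba_le C le (f i) (g i))"

definition daseinisation_D :: "('i \<Rightarrow> 'a set) \<Rightarrow> 'a \<Rightarrow> 'a \<Rightarrow> ('i \<Rightarrow> 'a)" where
  "daseinisation_D C z x = (\<lambda>i. if x \<in> C i then x else z)"

end

theory Submission
  imports Defs
begin

text \<open>Evaluate \<open>D x\<close> and \<open>D y\<close> at a context \<open>i\<close> containing \<open>x\<close>: there \<open>D x\<close> is \<open>x\<close>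
  itself, while \<open>D y\<close> is either \<open>y\<close> or the common bottom \<open>0\<close>. So \<open>D x = D y\<close> forces
  \<open>x = y\<close> or \<open>x = 0 = y\<close>, and \<open>D x \<le> D y\<close> forces \<open>x \<le> y\<close> or \<open>x \<le> 0\<close>, i.e. \<open>x = 0 \<le> y\<close>.\<close>

lemma inj_on_daseinisation_D: "inj_on (daseinisation_D C z) (pba_carrier C)"
proof (rule inj_onI)
  fix x y
  assume "x \<in> pba_carrier C" "y \<in> pba_carrier C"
    and eq: "daseinisation_D C z x = daseinisation_D C z y"
  then obtain i j where xi: "x \<in> C i" and yj: "y \<in> C j"
    unfolding pba_carrier_def by blast
  have x_eq: "x = (if y \<in> C i then y else z)"
    using fun_cong[OF eq, of i] xi unfolding daseinisation_D_def by simp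
  have y_eq: "y = (if x \<in> C j then x else z)"
    using fun_cong[OF eq, of j] yj unfolding daseinisation_D_def by simp
  show "x = y"
  proof (cases "y \<in> C i")
    case True
    then show ?thesis using x_eq by simp
  next
    case False
    then have "x = z" using x_eq by simp
    then show ?thesis using y_eq by simp
  qed
qed

lemma boolean_algebra_bot_le:
  assumes "is_boolean_algebra C le neg jn z" and "x \<in> C"
  shows "z \<in> C" and "le z x"
  using assms by (simp_all add: is_boolean_algebra_def)

lemma boolean_algebra_antisym:
  assumes "is_boolean_algebra C le neg jn z"
    and "x \<in> C" and "y \<in> C" and "le x y" and "le y x"
  shows "x = y"
  using assms unfolding is_boolean_algebra_def by (elim conjE) blast

lemma pba_boolean_algebra:
  assumes "partial_boolean_algebra C le neg jn z"
  shows "is_boolean_algebra (C i) (le i) (neg i) (jn i) z"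
  using assms by (simp add: partial_boolean_algebra_def)

lemma pba_le_bot_imp_eq:
  assumes "partial_boolean_algebra C le neg jn z" and "pba_le C le x z"
  shows "x = z"
proof -
  obtain i where "x \<in> C i" "le i x z"
    using assms(2) unfolding pba_le_def by blast
  with boolean_algebra_antisym[OF pba_boolean_algebra[OF assms(1)]]
    boolean_algebra_bot_le[OF pba_boolean_algebra[OF assms(1)]]
  show ?thesis by blast
qed

lemma pba_bot_le:
  assumes "partial_boolean_algebra C le neg jn z" and "y \<in> pba_carrier C"
  shows "pba_le C le z y"
proof -
  obtain i where "y \<in> C i"
    using assms(2) unfolding pba_carrier_def by blast
  then show ?thesis
    using boolean_algebra_bot_le[OF pba_boolean_algebra[OF assms(1)]]
    unfolding pba_le_def by blast
qed

lemma daseinisation_D_reflects_le: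
  assumes pba: "partial_boolean_algebra C le neg jn z"
    and x: "x \<in> pba_carrier C" and y: "y \<in> pba_carrier C"
    and le_D: "heyting_Y_le C le (daseinisation_D C z x) (daseinisation_D C z y)"
  shows "pba_le C le x y"
proof -
  obtain i where xi: "x \<in> C i"
    using x unfolding pba_carrier_def by blast
  have "pba_le C le (daseinisation_D C z x i) (daseinisation_D C z y i)"
    using le_D unfolding heyting_Y_le_def by blast
  then have le_at_i: "pba_le C le x (if y \<in> C i then y else z)"
    using xi unfolding daseinisation_D_def by simp
  show ?thesis
  proof (cases "y \<in> C i")
    case True
    then show ?thesis using le_at_i by simp
  next
    case False
    then have "x = z" using le_at_i pba_le_bot_imp_eq[OF pba] by simp
    then show ?thesis using pba_bot_le[OF pba y] by simp
  qed
qed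

theorem proposition21:
  fixes C :: "'i::order \<Rightarrow> 'a set"
    and le :: "'i \<Rightarrow> 'a \<Rightarrow> 'a \<Rightarrow> bool"
    and neg :: "'i \<Rightarrow> 'a \<Rightarrow> 'a"
    and jn :: "'i \<Rightarrow> 'a \<Rightarrow> 'a \<Rightarrow> 'a"
    and z :: 'a
  assumes pba: "partial_boolean_algebra C le neg jn z"
    and complete: "\<forall>i. is_complete_ba (C i) (le i)"
    and mono: "\<forall>i j. i \<le> j \<longrightarrow> C i \<subseteq> C j"
  shows "inj_on (daseinisation_D C z) (pba_carrier C) \<and>
    (\<forall>x\<in>pba_carrier C. \<forall>y\<in>pba_carrier C.
       heyting_Y_le C le (daseinisation_D C z x) (daseinisation_D C z y) \<longrightarrow> pba_le C le x y)"
  using inj_on_daseinisation_D daseinisation_D_reflects_le[OF pba] by simp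

end
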